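(* Let $D$ be a delta-matroid on $[n,\overline{n}]$. Then $$U_D(u,v-1)=\sum_{I\text{ independent in }D}u^{n-|I|}v^{a(I)}.$$
   Context: For a finite $E\subseteq\{1,2,3,\dots\}$ let $E\cup\overline{E}$ consist of $E$ and formal copies $\overline{i}$ ($i\in E$), with involution $a\mapsto\overline{a}$; $\overline{S}=\{\overline{a}:a\in S\}$; $[n,\overline{n}]$ denotes this for $E=[n]$. A subset is admissible if it contains at most one of $i,\overline{i}$ for each $i$; $\operatorname{AdS}_n$ is the set of admissible subsets of $[n,\overline{n}]$. In $\mathbb{R}^E$ set $e_{\overline{i}}=-e_i$, $e_S=\sum_{a\in S}e_a$. A delta-matroid on $E\cup\overline{E}$ is a nonempty collection $\mathcal{F}$ of admissible sets of size $|E|$ (feasible sets) such that $\operatorname{Conv}\{e_B:B\in\mathcal{F}\}$ has all edges parallel to some $e_i$ or $e_i\pm e_j$. Rank function: $g_D(S)=\max_{B\in\mathcal{F}}(|S\cap B|-|\overline{S}\cap B|)$. $U_D(u,v)=\sum_{S\in\operatorname{AdS}_n}u^{n-|S|}v^{(|S|-g_D(S))/2}$. An admissible $S$ is independent in $D$ if $g_D(S)=|S|$, equivalently if $S$ is contained in a feasible set. For $A\subseteq[n]$, the projection $D(A)$ is the delta-matroid on $([n]\setminus A)\cup\overline{([n]\setminus A)}$ with feasible sets $B\setminus(A\cup\overline{A})$, $B\in\mathcal{F}$. For $S$ admissible, $\underline{S}\subseteq[n]$ is its unsigned version (image under identifying $i$ with $\overline{i}$). Order $[n]$ by $1<2<\dots<n$.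 For a delta-matroid $D'$ on $E\cup\overline{E}$ and a feasible set $B$ of $D'$: $i\in E$ is $B$-orientable if $B\,\Delta\,\{i,\overline{i}\}$ is not feasible in $D'$; $i$ is $B$-active if it is $B$-orientable and there is no $j\in E$ with $j<i$ such that $B\,\Delta\,\{i,j,\overline{i},\overline{j}\}$ is feasible in $D'$. For $I$ independent in $D$, $I$ is a feasible set of $D([n]\setminus\underline{I})$, and $i\in\underline{I}$ is called $I$-active if $i$ is $I$-active in $D([n]\setminus\underline{I})$; $a(I)$ is the number of $I$-active elements of $\underline{I}$. *)

theory Defs
  imports "HOL-Analysis.Analysis" "HOL-Analysis.Finite_Function_Topology"
begin

(* Elements of E \<union> \<overline>E are encoded as integers: i \<in> E (positive) and its
   bar \<overline>i as -i.  The ground set E is a finite set of positive integers. *)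

definition bar_set :: "int set \<Rightarrow> int set" where
  "bar_set S = uminus ` S"

definition admissible :: "int set \<Rightarrow> int set \<Rightarrow> bool" where
  "admissible E S \<longleftrightarrow> S \<subseteq> E \<union> bar_set E \<and> (\<forall>i. \<not> (i \<in> S \<and> - i \<in> S))"

definition AdS :: "nat \<Rightarrow> int set set" where
  "AdS n = {S. admissible {1..int n} S}"

definition evec1 :: "int \<Rightarrow> (nat \<Rightarrow>\<^sub>0 real)" where
  "evec1 a = of_int (sgn a) *\<^sub>R Poly_Mapping.single (nat \<bar>a\<bar>) 1"

definition evec :: "int set \<Rightarrow> (nat \<Rightarrow>\<^sub>0 real)" where
  "evec S = (\<Sum>a\<in>S. evec1 a)"

definition unit_dir :: "int \<Rightarrow> (nat \<Rightarrow>\<^sub>0 real)" where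
  "unit_dir i = Poly_Mapping.single (nat i) 1"

definition allowed_direction :: "int set \<Rightarrow> (nat \<Rightarrow>\<^sub>0 real) \<Rightarrow> bool" where
  "allowed_direction E d \<longleftrightarrow>
     (\<exists>c::real. \<exists>i\<in>E. d = c *\<^sub>R unit_dir i) \<or>
     (\<exists>c::real. \<exists>i\<in>E. \<exists>j\<in>E. i \<noteq> j \<and>
        (d = c *\<^sub>R (unit_dir i + unit_dir j) \<or> d = c *\<^sub>R (unit_dir i - unit_dir j)))"

(* edges of a polytope P: one-dimensional faces, i.e. faces that are segments [x,y], x \<noteq> y *)
definition delta_matroid :: "int set \<Rightarrow> int set set \<Rightarrow> bool" where
  "delta_matroid E \<F> \<longleftrightarrow>
     finite E \<and> E \<subseteq> {1..} \<and> \<F> \<noteq> {} \<and>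
     (\<forall>B\<in>\<F>. admissible E B \<and> card B = card E) \<and>
     (\<forall>x y. x \<noteq> y \<and> closed_segment x y face_of convex hull (evec ` \<F>)
        \<longrightarrow> allowed_direction E (y - x))"

definition rank_g :: "int set set \<Rightarrow> int set \<Rightarrow> int" where
  "rank_g \<F> S = Max ((\<lambda>B. int (card (S \<inter> B)) - int (card (bar_set S \<inter> B))) ` \<F>)"

definition U_poly :: "nat \<Rightarrow> int set set \<Rightarrow> 'a::comm_ring_1 \<Rightarrow> 'a \<Rightarrow> 'a" where
  "U_poly n \<F> u v = (\<Sum>S\<in>AdS n. u ^ (n - card S) * v ^ nat ((int (card S) - rank_g \<F> S) div 2))"

definition independent :: "nat \<Rightarrow> int set set \<Rightarrow> int set \<Rightarrow> bool" where
  "independent n \<F> S \<longleftrightarrow> S \<in> AdS n \<and> rank_g \<F> S = int (card S)"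

definition proj_feas :: "int set set \<Rightarrow> int set \<Rightarrow> int set set" where
  "proj_feas \<F> A = (\<lambda>B. B - (A \<union> bar_set A)) ` \<F>"

definition unsigned :: "int set \<Rightarrow> int set" where
  "unsigned S = abs ` S"

definition orientable :: "int set set \<Rightarrow> int set \<Rightarrow> int \<Rightarrow> bool" where
  "orientable \<F>' B i \<longleftrightarrow> (B - {i, - i}) \<union> ({i, - i} - B) \<notin> \<F>'"

definition active :: "int set \<Rightarrow> int set set \<Rightarrow> int set \<Rightarrow> int \<Rightarrow> bool" where
  "active E' \<F>' B i \<longleftrightarrow> i \<in> E' \<and> orientable \<F>' B i \<and>
     \<not> (\<exists>j\<in>E'. j < i \<and> (B - {i, j, - i, - j}) \<union> ({i, j, - i, - j} - B) \<in> \<F>')"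

definition a_count :: "nat \<Rightarrow> int set set \<Rightarrow> int set \<Rightarrow> nat" where
  "a_count n \<F> I = card {i \<in> unsigned I.
      active ({1..int n} - ({1..int n} - unsigned I)) (proj_feas \<F> ({1..int n} - unsigned I)) I i}"

end

theory Submission
  imports Defs
begin

(* Group the admissible sets S by their unsigned support T. Those with support T are the
   transversals of T (one of k, -k for each k in T); the term of S in U_D(u, v - 1) is
   u^(n - |T|) (v - 1)^d(S), where d(S) = min_B |S - B| is the distance to the feasible sets;
   and the independent sets with support T are the feasible sets of the projection D(E - T).
   So it suffices to show, for every family F of transversals of T with the symmetric exchange
   property, that  \<Sum>_S (v - 1)^d(S) = \<Sum>_{B in F} v^a(B),  where a(B) counts the i whose
   membership in B is forced by the coordinates above i (for such F, this is the activity of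
   the paper). This goes by induction on T, deleting its largest element m. If all feasible
   sets contain the same sign s of m, then d(S + -s) = d(S + s) + 1, the two terms add up to
   v (v - 1)^d, and m is active everywhere; if both signs occur, exchanging at m shows that
   d(S + s) is the distance within the feasible sets containing s, and m is active nowhere.
   The exchange property comes from the edge condition on the polytope: a feasible set y
   closest to B1 among those disagreeing with B1 at i spans an edge with B1, exposed by a
   weighted linear functional, and the direction of that edge forces
   y = B1 \<Delta> {i, j, -i, -j}. *)

section \<open>Transversals\<close>

lemma minus_notin_positive: "E \<subseteq> {1..} \<Longrightarrow> x \<in> E \<Longrightarrow> -x \<notin> (E :: int set)"
  by (smt (verit) atLeast_iff subsetD)

definition transversal :: "int set \<Rightarrow> int set \<Rightarrow> bool" where
  "transversal T S \<longleftrightarrow> S \<subseteq> T \<union> uminus ` T \<and> (\<forall>k\<in>T. k \<in> S \<longleftrightarrow> -k \<notin> S)"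

lemma transversalI:
  assumes "\<And>x. x \<in> S \<Longrightarrow> x \<in> T \<or> -x \<in> T" and "\<And>k. k \<in> T \<Longrightarrow> k \<in> S \<longleftrightarrow> -k \<notin> S"
  shows "transversal T S"
  unfolding transversal_def using assms by (metis UnI1 UnI2 image_eqI minus_minus subsetI)

lemma transversal_memD: "transversal T S \<Longrightarrow> k \<in> T \<Longrightarrow> k \<in> S \<longleftrightarrow> -k \<notin> S"
  unfolding transversal_def by blast

lemma transversal_subD: "transversal T S \<Longrightarrow> x \<in> S \<Longrightarrow> x \<in> T \<or> -x \<in> T"
  unfolding transversal_def by force

lemma transversal_empty: "transversal {} S \<longleftrightarrow> S = {}"
  unfolding transversal_def by simp

lemma finite_transversals: "finite T \<Longrightarrow> finite {S. transversal T S}"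
  by (rule finite_subset[of _ "Pow (T \<union> uminus ` T)"]) (auto simp: transversal_def)

lemma finite_transversal: "finite T \<Longrightarrow> transversal T S \<Longrightarrow> finite S"
  unfolding transversal_def by (meson finite_Un finite_imageI rev_finite_subset)

lemma transversal_eqI:
  assumes B: "transversal T B" and B': "transversal T B'"
    and agree: "\<And>k. k \<in> T \<Longrightarrow> k \<in> B \<longleftrightarrow> k \<in> B'"
  shows "B = B'"
proof (rule set_eqI)
  fix x
  consider "x \<in> T" | "-x \<in> T" | "x \<notin> T" "-x \<notin> T" by blast
  then show "x \<in> B \<longleftrightarrow> x \<in> B'"
  proof cases
    case 2
    have "x \<in> B \<longleftrightarrow> -x \<notin> B" "x \<in> B' \<longleftrightarrow> -x \<notin> B'"
      using transversal_memD[OF B 2] transversal_memD[OF B' 2] by simp_all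
    then show ?thesis using agree[OF 2] by simp
  qed (use agree transversal_subD[OF B, of x] transversal_subD[OF B', of x] in auto)
qed

lemma transversal_abs:
  assumes pos: "T \<subseteq> {1..}" and S: "transversal T S"
  shows "abs ` S = T" and "inj_on abs S"
proof -
  have sign: "x \<in> T \<and> \<bar>x\<bar> = x \<or> -x \<in> T \<and> \<bar>x\<bar> = -x" if "x \<in> S" for x
    using transversal_subD[OF S that] pos by (auto simp: subset_eq)
  show "abs ` S = T"
  proof (intro subset_antisym subsetI)
    fix k assume k: "k \<in> T"
    then have "\<bar>k\<bar> = k" "\<bar>-k\<bar> = k" using pos by auto
    moreover have "k \<in> S \<or> -k \<in> S" using transversal_memD[OF S k] by blast
    ultimately show "k \<in> abs ` S" by (metis image_eqI)
  qed (use sign in force)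
  show "inj_on abs S"
  proof (rule inj_onI)
    fix x y assume xy: "x \<in> S" "y \<in> S" "\<bar>x\<bar> = \<bar>y\<bar>"
    then have "x = y \<or> x = -y" by arith
    then show "x = y"
      using sign[OF xy(1)] transversal_memD[OF S, of x] transversal_memD[OF S, of "-x"] xy by auto
  qed
qed

lemma card_transversal: "T \<subseteq> {1..} \<Longrightarrow> transversal T S \<Longrightarrow> card S = card T"
  using transversal_abs card_image by metis

lemma transversal_insert_remove:
  assumes S: "transversal (insert m T) S" and pos: "T \<subseteq> {1..}" and "m \<notin> T" "1 \<le> m"
  shows "transversal T (S - {m, -m})"
proof (rule transversalI)
  fix x assume "x \<in> S - {m, -m}"
  then show "x \<in> T \<or> -x \<in> T" using transversal_subD[OF S, of x] by auto
next
  fix k assume k: "k \<in> T"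
  then have "k \<noteq> m" "k \<noteq> -m" using assms pos by (auto simp: subset_eq)
  then show "k \<in> S - {m, -m} \<longleftrightarrow> -k \<notin> S - {m, -m}"
    using transversal_memD[OF S, of k] k by auto
qed

lemma transversal_avoids:
  assumes S: "transversal T S" and "T \<subseteq> {1..}" "m \<notin> T" "1 \<le> m"
  shows "m \<notin> S" "-m \<notin> S"
proof -
  have "-m \<notin> T" using assms(2,4) by (auto simp: subset_eq)
  then show "m \<notin> S" "-m \<notin> S"
    using transversal_subD[OF S, of m] transversal_subD[OF S, of "-m"] assms(3) by auto
qed

lemma transversal_insert:
  assumes S: "transversal T S" and pos: "T \<subseteq> {1..}" and "m \<notin> T" "1 \<le> m" and s: "s \<in> {m, -m}"
  shows "transversal (insert m T) (insert s S)"
proof (rule transversalI)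
  fix x assume "x \<in> insert s S"
  then show "x \<in> insert m T \<or> -x \<in> insert m T" using s transversal_subD[OF S, of x] by auto
next
  have avoid: "m \<notin> S" "-m \<notin> S" using transversal_avoids[OF S pos assms(3,4)] .
  fix k assume "k \<in> insert m T"
  then consider "k = m" | "k \<in> T" "1 \<le> k" "k \<noteq> m"
    using pos assms(3) by fastforce
  then show "k \<in> insert s S \<longleftrightarrow> -k \<notin> insert s S"
  proof cases
    case 1
    then show ?thesis using s avoid assms(4) by auto
  next
    case 2
    then show ?thesis using transversal_memD[OF S, of k] s assms(4) by auto
  qed
qed

lemma transversals_insert:
  assumes "T \<subseteq> {1..}" "m \<notin> T" "1 \<le> m"
  shows "{S. transversal (insert m T) S} =
    insert m ` {S. transversal T S} \<union> insert (-m) ` {S. transversal T S}"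
proof (intro subset_antisym subsetI)
  fix S assume "S \<in> {S. transversal (insert m T) S}"
  then have S: "transversal (insert m T) S" by simp
  have S0: "S - {m, -m} \<in> {S. transversal T S}" using transversal_insert_remove[OF S assms] by simp
  have "m \<in> S \<longleftrightarrow> -m \<notin> S" using transversal_memD[OF S] by simp
  then have "S = insert m (S - {m, -m}) \<or> S = insert (-m) (S - {m, -m})" by auto
  then show "S \<in> insert m ` {S. transversal T S} \<union> insert (-m) ` {S. transversal T S}"
    using S0 by blast
qed (use transversal_insert[OF _ assms] in auto)

lemma sum_transversals_insert:
  fixes f :: "int set \<Rightarrow> 'a::comm_monoid_add"
  assumes "finite T" "T \<subseteq> {1..}" "m \<notin> T" "1 \<le> m"
  shows "(\<Sum>S | transversal (insert m T) S. f S) =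
    (\<Sum>S | transversal T S. f (insert m S)) + (\<Sum>S | transversal T S. f (insert (-m) S))"
proof -
  let ?X = "{S. transversal T S}"
  have avoid: "m \<notin> S" "-m \<notin> S" if "S \<in> ?X" for S
    using that transversal_avoids[OF _ assms(2-4)] by auto
  have inj: "inj_on (insert s) ?X" if "s \<in> {m, -m}" for s
  proof (rule inj_onI)
    fix S S' assume "S \<in> ?X" "S' \<in> ?X" "insert s S = insert s S'"
    then show "S = S'" using avoid that by (metis empty_iff insert_ident insert_iff)
  qed
  have disjoint: "insert m ` ?X \<inter> insert (-m) ` ?X = {}"
  proof -
    have False if "S' \<in> ?X" "m \<in> insert (-m) S'" for S'
      using that avoid assms(4) by auto
    then show ?thesis by blast
  qed
  have "(\<Sum>S | transversal (insert m T) S. f S) = sum f (insert m ` ?X) + sum f (insert (-m) ` ?X)"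
    unfolding transversals_insert[OF assms(2-4)]
    using disjoint finite_transversals[OF assms(1)] by (simp add: sum.union_disjoint)
  also have "\<dots> = (\<Sum>S\<in>?X. f (insert m S)) + (\<Sum>S\<in>?X. f (insert (-m) S))"
    by (simp add: sum.reindex[OF inj[of m]] sum.reindex[OF inj[of "-m"]])
  finally show ?thesis .
qed

section \<open>Symmetric exchange and distance to the feasible sets\<close>

definition twist :: "int set \<Rightarrow> int \<Rightarrow> int \<Rightarrow> int set" where
  "twist B i j = (B - {i, j, -i, -j}) \<union> ({i, j, -i, -j} - B)"

lemma mem_twist: "x \<in> twist B i j \<longleftrightarrow> (x \<in> B \<longleftrightarrow> x \<notin> {i, j, -i, -j})"
  unfolding twist_def by auto

lemma transversal_twist:
  assumes "transversal T B" "i \<in> T" "j \<in> T"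
  shows "transversal T (twist B i j)"
proof (rule transversalI)
  fix x assume "x \<in> twist B i j"
  then have "x \<in> B \<or> x \<in> {i, j, -i, -j}" by (auto simp: mem_twist)
  then show "x \<in> T \<or> -x \<in> T" using transversal_subD[OF assms(1), of x] assms(2,3) by auto
next
  fix k assume k: "k \<in> T"
  have "k \<in> {i, j, -i, -j} \<longleftrightarrow> -k \<in> {i, j, -i, -j}" by auto
  then show "k \<in> twist B i j \<longleftrightarrow> -k \<notin> twist B i j"
    unfolding mem_twist using transversal_memD[OF assms(1) k] by blast
qed

definition symmetric_exchange :: "int set \<Rightarrow> int set set \<Rightarrow> bool" where
  "symmetric_exchange T F \<longleftrightarrow> (\<forall>B1\<in>F. \<forall>B2\<in>F. \<forall>i\<in>T. (i \<in> B1 \<longleftrightarrow> i \<notin> B2) \<longrightarrow>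
      (\<exists>j\<in>T. (j \<in> B1 \<longleftrightarrow> j \<notin> B2) \<and> twist B1 i j \<in> F))"

lemma symmetric_exchangeD:
  assumes "symmetric_exchange T F" "B1 \<in> F" "B2 \<in> F" "i \<in> T" "i \<in> B1 \<longleftrightarrow> i \<notin> B2"
  obtains j where "j \<in> T" "j \<in> B1 \<longleftrightarrow> j \<notin> B2" "twist B1 i j \<in> F"
  using assms unfolding symmetric_exchange_def by metis

definition feasible_distance :: "int set set \<Rightarrow> int set \<Rightarrow> nat" where
  "feasible_distance F S = Min ((\<lambda>B. card (S - B)) ` F)"

lemma feasible_distance_le: "finite F \<Longrightarrow> B \<in> F \<Longrightarrow> feasible_distance F S \<le> card (S - B)"
  unfolding feasible_distance_def by (rule Min_le) auto

lemma feasible_distance_attained: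
  assumes "finite F" "F \<noteq> {}"
  obtains B where "B \<in> F" "feasible_distance F S = card (S - B)"
proof -
  have "Min ((\<lambda>B. card (S - B)) ` F) \<in> (\<lambda>B. card (S - B)) ` F" using assms by (intro Min_in) auto
  then show ?thesis using that unfolding feasible_distance_def by auto
qed

lemma feasible_distance_eqI:
  assumes "finite F" "B \<in> F" "card (S - B) = d" "\<And>B'. B' \<in> F \<Longrightarrow> d \<le> card (S - B')"
  shows "feasible_distance F S = d"
  by (metis assms feasible_distance_attained feasible_distance_le empty_iff le_antisym)

lemma feasible_distance_image:
  assumes "\<And>B. B \<in> F \<Longrightarrow> S - f B = S - B"
  shows "feasible_distance (f ` F) S = feasible_distance F S"
  unfolding feasible_distance_def image_image using assms by (metis (no_types, lifting) image_cong)

section \<open>Distance sums and activity sums\<close>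

definition determined_by_higher :: "int set \<Rightarrow> int set set \<Rightarrow> int set \<Rightarrow> int \<Rightarrow> bool" where
  "determined_by_higher T F B i \<longleftrightarrow>
     (\<forall>B'\<in>F. (\<forall>k\<in>T. i < k \<longrightarrow> (k \<in> B' \<longleftrightarrow> k \<in> B)) \<longrightarrow> (i \<in> B' \<longleftrightarrow> i \<in> B))"

definition distance_sum :: "int set \<Rightarrow> int set set \<Rightarrow> 'a::comm_ring_1 \<Rightarrow> 'a" where
  "distance_sum T F v = (\<Sum>S | transversal T S. (v - 1) ^ feasible_distance F S)"

definition activity :: "int set \<Rightarrow> int set set \<Rightarrow> int set \<Rightarrow> nat" where
  "activity T F B = card {i \<in> T. determined_by_higher T F B i}"

definition activity_sum :: "int set \<Rightarrow> int set set \<Rightarrow> 'a::comm_ring_1 \<Rightarrow> 'a" where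
  "activity_sum T F v = (\<Sum>B\<in>F. v ^ activity T F B)"

locale top_deletion =
  fixes T :: "int set" and m :: int and F :: "int set set"
  assumes positive: "T \<subseteq> {1..}" and finite_T: "finite T" and below_top: "\<And>k. k \<in> T \<Longrightarrow> k < m"
    and top_positive: "1 \<le> m"
    and transversals: "\<And>B. B \<in> F \<Longrightarrow> transversal (insert m T) B"
    and exchange: "symmetric_exchange (insert m T) F"
begin

lemma top_notin: "m \<notin> T"
  using below_top by blast

lemma lower_bounds: "k \<in> T \<Longrightarrow> 1 \<le> k \<and> k < m"
  using positive below_top by (auto simp: subset_eq)

lemma finite_F: "finite F"
  using finite_subset[OF _ finite_transversals[of "insert m T"]] finite_T transversals by blast

lemma top_sign: "B \<in> F \<Longrightarrow> m \<in> B \<longleftrightarrow> -m \<notin> B"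
  using transversal_memD[OF transversals insertI1] .

definition strip :: "int set \<Rightarrow> int set" where
  "strip B = B - {m, -m}"

definition slice :: "int \<Rightarrow> int set set" where
  "slice s = strip ` {B \<in> F. s \<in> B}"

lemma strip_transversal: "B \<in> F \<Longrightarrow> transversal T (strip B)"
  unfolding strip_def by (rule transversal_insert_remove[OF transversals positive top_notin top_positive])

lemma insert_strip: "B \<in> F \<Longrightarrow> s \<in> {m, -m} \<Longrightarrow> s \<in> B \<Longrightarrow> insert s (strip B) = B"
  unfolding strip_def using top_sign[of B] by auto

lemma mem_strip_lower: "k \<in> T \<Longrightarrow> k \<in> strip B \<longleftrightarrow> k \<in> B"
  unfolding strip_def using lower_bounds[of k] by auto

lemma diff_strip: "transversal T S \<Longrightarrow> S - strip B = S - B"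
  unfolding strip_def using transversal_avoids[OF _ positive top_notin top_positive] by blast

lemma inj_on_strip: "s \<in> {m, -m} \<Longrightarrow> inj_on strip {B \<in> F. s \<in> B}"
  by (rule inj_onI) (metis (mono_tags, lifting) insert_strip mem_Collect_eq)

lemma finite_slice: "finite (slice s)"
  unfolding slice_def using finite_F by simp

lemma slice_transversals: "B \<in> slice s \<Longrightarrow> transversal T B"
  unfolding slice_def using strip_transversal by auto

lemma strip_twist:
  assumes "i \<in> T" "j \<in> T"
  shows "strip (twist B i j) = twist (strip B) i j"
proof -
  have "{m, -m} \<inter> {i, j, -i, -j} = {}" using lower_bounds[OF assms(1)] lower_bounds[OF assms(2)] by auto
  then show ?thesis unfolding strip_def twist_def by blast
qed

lemma slice_exchange:
  assumes s: "s \<in> {m, -m}"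
  shows "symmetric_exchange T (slice s)"
  unfolding symmetric_exchange_def
proof (intro ballI impI)
  fix B1' B2' i assume "B1' \<in> slice s" "B2' \<in> slice s" and i: "i \<in> T" and differ: "i \<in> B1' \<longleftrightarrow> i \<notin> B2'"
  then obtain B1 B2 where B1: "B1 \<in> F" "s \<in> B1" "B1' = strip B1" and B2: "B2 \<in> F" "s \<in> B2" "B2' = strip B2"
    unfolding slice_def by blast
  have "i \<in> B1 \<longleftrightarrow> i \<notin> B2" using differ mem_strip_lower[OF i] B1(3) B2(3) by simp
  then obtain j where j: "j \<in> insert m T" "j \<in> B1 \<longleftrightarrow> j \<notin> B2" "twist B1 i j \<in> F"
    using symmetric_exchangeD[OF exchange B1(1) B2(1)] i by blast
  have "m \<in> B1 \<longleftrightarrow> m \<in> B2" using s B1 B2 top_sign by auto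
  then have jT: "j \<in> T" using j(1,2) by auto
  have "s \<notin> {i, j, -i, -j}" using s lower_bounds[OF i] lower_bounds[OF jT] by auto
  then have "s \<in> twist B1 i j" using B1(2) by (simp add: mem_twist)
  then have "twist B1' i j \<in> slice s"
    unfolding slice_def B1(3) strip_twist[OF i jT, symmetric] using j(3) by blast
  moreover have "j \<in> B1' \<longleftrightarrow> j \<notin> B2'" using j(2) mem_strip_lower[OF jT] B1(3) B2(3) by simp
  ultimately show "\<exists>j\<in>T. (j \<in> B1' \<longleftrightarrow> j \<notin> B2') \<and> twist B1' i j \<in> slice s" using jT by blast
qed

lemma card_insert_diff:
  assumes S: "transversal T S" and s: "s \<in> {m, -m}"
  shows "card (insert s S - B) = card (S - B) + of_bool (s \<notin> B)"
proof -
  have "s \<notin> S" using transversal_avoids[OF S positive top_notin top_positive] s by auto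
  moreover have "finite S" using finite_transversal[OF finite_T S] .
  ultimately show ?thesis by (cases "s \<in> B") (simp_all add: insert_Diff_if)
qed

text \<open>Exchanging at \<open>m\<close> towards a feasible set containing \<open>s\<close> changes only one further
  coordinate, so it costs at most one unit of distance.\<close>

lemma exchange_top:
  assumes s: "s \<in> {m, -m}" and B: "B \<in> F" "s \<notin> B" and B2: "B2 \<in> F" "s \<in> B2"
    and S: "transversal T S"
  obtains B' where "B' \<in> F" "s \<in> B'" "card (S - B') \<le> card (S - B) + 1"
proof -
  have "m \<in> B \<longleftrightarrow> m \<notin> B2" using s B B2 top_sign by auto
  then obtain j where j: "j \<in> insert m T" "twist B m j \<in> F"
    using symmetric_exchangeD[OF exchange B(1) B2(1)] by blast
  have avoid: "m \<notin> S" "-m \<notin> S" using transversal_avoids[OF S positive top_notin top_positive] .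
  have finS: "finite S" using finite_transversal[OF finite_T S] .
  have "s \<in> twist B m j" using s B(2) by (auto simp: mem_twist)
  moreover have "card (S - twist B m j) \<le> card (S - B) + 1"
  proof -
    have "S - twist B m j \<subseteq> (S - B) \<union> (S \<inter> {j, -j})"
      using avoid by (auto simp: mem_twist)
    then have "card (S - twist B m j) \<le> card ((S - B) \<union> (S \<inter> {j, -j}))"
      using finS by (intro card_mono) auto
    also have "\<dots> \<le> card (S - B) + card (S \<inter> {j, -j})" by (rule card_Un_le)
    finally have "card (S - twist B m j) \<le> card (S - B) + card (S \<inter> {j, -j})" .
    moreover have "card (S \<inter> {j, -j}) \<le> 1"
    proof (cases "j \<in> T")
      case True
      then have "S \<inter> {j, -j} = {j} \<or> S \<inter> {j, -j} = {-j}" using transversal_memD[OF S True] by auto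
      then show ?thesis by auto
    next
      case False
      then show ?thesis using j(1) avoid by auto
    qed
    ultimately show ?thesis by linarith
  qed
  ultimately show ?thesis using that[OF j(2)] by simp
qed

lemma distance_insert:
  assumes s: "s \<in> {m, -m}" and ex: "\<exists>B\<in>F. s \<in> B" and S: "transversal T S"
  shows "feasible_distance F (insert s S) = feasible_distance (slice s) S"
proof -
  have "slice s \<noteq> {}" using ex unfolding slice_def by blast
  then obtain B0' where B0': "B0' \<in> slice s" "feasible_distance (slice s) S = card (S - B0')"
    using feasible_distance_attained[OF finite_slice] by metis
  then obtain B0 where B0: "B0 \<in> F" "s \<in> B0" "B0' = strip B0" unfolding slice_def by blast
  have lower: "feasible_distance (slice s) S \<le> card (S - B)" if "B \<in> F" "s \<in> B" for B
    using feasible_distance_le[OF finite_slice, of "strip B" s S] that diff_strip[OF S]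
    unfolding slice_def by auto
  show ?thesis
  proof (rule feasible_distance_eqI[OF finite_F B0(1)])
    show "card (insert s S - B0) = feasible_distance (slice s) S"
      using card_insert_diff[OF S s] B0 B0' diff_strip[OF S] by simp
  next
    fix B assume B: "B \<in> F"
    show "feasible_distance (slice s) S \<le> card (insert s S - B)"
    proof (cases "s \<in> B")
      case True
      then show ?thesis using lower[OF B] card_insert_diff[OF S s] by simp
    next
      case False
      obtain B2 where "B2 \<in> F" "s \<in> B2" using ex by blast
      then obtain B' where "B' \<in> F" "s \<in> B'" "card (S - B') \<le> card (S - B) + 1"
        using exchange_top[OF s B False _ _ S] by blast
      then show ?thesis using lower card_insert_diff[OF S s, of B] False by fastforce
    qed
  qed
qed

lemma distance_insert_opposite:
  assumes s: "s \<in> {m, -m}" and all: "\<forall>B\<in>F. s \<in> B" and "F \<noteq> {}" and S: "transversal T S"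
  shows "feasible_distance F (insert (-s) S) = feasible_distance (slice s) S + 1"
proof -
  have s': "-s \<in> {m, -m}" using s by auto
  have missing: "-s \<notin> B" if "B \<in> F" for B using all s top_sign that by auto
  have "slice s \<noteq> {}" using all \<open>F \<noteq> {}\<close> unfolding slice_def by blast
  then obtain B0' where B0': "B0' \<in> slice s" "feasible_distance (slice s) S = card (S - B0')"
    using feasible_distance_attained[OF finite_slice] by metis
  then obtain B0 where B0: "B0 \<in> F" "B0' = strip B0" unfolding slice_def by blast
  show ?thesis
  proof (rule feasible_distance_eqI[OF finite_F B0(1)])
    show "card (insert (-s) S - B0) = feasible_distance (slice s) S + 1"
      using card_insert_diff[OF S s'] missing[OF B0(1)] B0 B0' diff_strip[OF S] by simp
  next
    fix B assume B: "B \<in> F"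
    then have "feasible_distance (slice s) S \<le> card (S - strip B)"
      using all by (intro feasible_distance_le[OF finite_slice]) (auto simp: slice_def)
    then show "feasible_distance (slice s) S + 1 \<le> card (insert (-s) S - B)"
      using card_insert_diff[OF S s'] missing[OF B] diff_strip[OF S] by simp
  qed
qed

lemma determined_lower:
  assumes B: "B \<in> F" "s \<in> B" and s: "s \<in> {m, -m}" and i: "i \<in> T"
  shows "determined_by_higher (insert m T) F B i \<longleftrightarrow> determined_by_higher T (slice s) (strip B) i"
proof -
  have agree_top: "(\<forall>k\<in>insert m T. i < k \<longrightarrow> (k \<in> B' \<longleftrightarrow> k \<in> B)) \<longleftrightarrow>
      s \<in> B' \<and> (\<forall>k\<in>T. i < k \<longrightarrow> (k \<in> strip B' \<longleftrightarrow> k \<in> strip B))" if "B' \<in> F" for B'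
    using lower_bounds[OF i] top_sign[OF that] top_sign[OF B(1)] B(2) s mem_strip_lower by auto
  have "determined_by_higher (insert m T) F B i \<longleftrightarrow>
      (\<forall>B'\<in>{B' \<in> F. s \<in> B'}. (\<forall>k\<in>T. i < k \<longrightarrow> (k \<in> strip B' \<longleftrightarrow> k \<in> strip B)) \<longrightarrow>
        (i \<in> strip B' \<longleftrightarrow> i \<in> strip B))"
    unfolding determined_by_higher_def using agree_top mem_strip_lower[OF i] by auto
  then show ?thesis unfolding determined_by_higher_def slice_def by simp
qed

lemma determined_top:
  "determined_by_higher (insert m T) F B m \<longleftrightarrow> (\<forall>B'\<in>F. m \<in> B' \<longleftrightarrow> m \<in> B)"
  unfolding determined_by_higher_def using below_top by fastforce

lemma activity_sum_slice:
  fixes v :: "'a::comm_ring_1"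
  assumes s: "s \<in> {m, -m}" and top: "\<And>B. B \<in> F \<Longrightarrow> s \<in> B \<Longrightarrow> determined_by_higher (insert m T) F B m = d"
  shows "(\<Sum>B\<in>{B \<in> F. s \<in> B}. v ^ activity (insert m T) F B) = v ^ of_bool d * activity_sum T (slice s) v"
proof -
  have "activity (insert m T) F B = of_bool d + activity T (slice s) (strip B)" if "B \<in> F" "s \<in> B" for B
  proof -
    define X where "X = {i \<in> T. determined_by_higher T (slice s) (strip B) i}"
    have "{i \<in> insert m T. determined_by_higher (insert m T) F B i} = (if d then insert m X else X)"
      using determined_lower[OF that s] top[OF that] unfolding X_def by auto
    moreover have "finite X" "m \<notin> X" using finite_T top_notin unfolding X_def by auto
    ultimately show ?thesis unfolding activity_def X_def by simp
  qed
  then have "(\<Sum>B\<in>{B \<in> F. s \<in> B}. v ^ activity (insert m T) F B)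
      = (\<Sum>B\<in>{B \<in> F. s \<in> B}. v ^ of_bool d * v ^ activity T (slice s) (strip B))"
    by (intro sum.cong) (simp_all add: power_add)
  also have "\<dots> = v ^ of_bool d * activity_sum T (slice s) v"
    unfolding activity_sum_def slice_def sum_distrib_left sum.reindex[OF inj_on_strip[OF s]] by simp
  finally show ?thesis .
qed

lemma sum_split_top_sign: "sum g F = sum g {B \<in> F. m \<in> B} + sum g {B \<in> F. -m \<in> B}"
proof -
  have "F = {B \<in> F. m \<in> B} \<union> {B \<in> F. -m \<in> B}" "{B \<in> F. m \<in> B} \<inter> {B \<in> F. -m \<in> B} = {}"
    using top_sign by auto
  then show ?thesis using finite_F by (metis (no_types, lifting) finite_Un sum.union_disjoint)
qed

lemma distance_sum_split:
  "distance_sum (insert m T) F v =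
    (\<Sum>S | transversal T S. (v - 1) ^ feasible_distance F (insert m S)) +
    (\<Sum>S | transversal T S. (v - 1) ^ feasible_distance F (insert (-m) S))"
  unfolding distance_sum_def by (rule sum_transversals_insert[OF finite_T positive top_notin top_positive])

lemma distance_sum_eq_activity_sum_if_fixed_sign:
  fixes v :: "'a::comm_ring_1"
  assumes s: "s \<in> {m, -m}" and all: "\<forall>B\<in>F. s \<in> B" and "F \<noteq> {}"
    and IH: "distance_sum T (slice s) v = activity_sum T (slice s) v"
  shows "distance_sum (insert m T) F v = activity_sum (insert m T) F v"
proof -
  have ex: "\<exists>B\<in>F. s \<in> B" using all \<open>F \<noteq> {}\<close> by blast
  have "distance_sum (insert m T) F v =
      (\<Sum>S | transversal T S. (v - 1) ^ feasible_distance F (insert s S) +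
                              (v - 1) ^ feasible_distance F (insert (-s) S))"
    unfolding distance_sum_split sum.distrib using s by (auto simp: add.commute)
  also have "\<dots> = (\<Sum>S | transversal T S. v * (v - 1) ^ feasible_distance (slice s) S)"
    by (intro sum.cong refl)
      (simp add: distance_insert[OF s ex] distance_insert_opposite[OF s all \<open>F \<noteq> {}\<close>] algebra_simps)
  also have "\<dots> = v ^ of_bool True * activity_sum T (slice s) v"
    using IH by (simp add: distance_sum_def sum_distrib_left[symmetric])
  also have "\<dots> = activity_sum (insert m T) F v"
  proof -
    have "determined_by_higher (insert m T) F B m" if "B \<in> F" for B
      using determined_top all s top_sign that by auto
    moreover have "{B \<in> F. s \<in> B} = F" using all by blast
    ultimately show ?thesis using activity_sum_slice[OF s, of True v] unfolding activity_sum_def by simp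
  qed
  finally show ?thesis .
qed

lemma distance_sum_eq_activity_sum_if_both_signs:
  fixes v :: "'a::comm_ring_1"
  assumes both: "\<And>s. s \<in> {m, -m} \<Longrightarrow> \<exists>B\<in>F. s \<in> B"
    and IH: "\<And>s. s \<in> {m, -m} \<Longrightarrow> distance_sum T (slice s) v = activity_sum T (slice s) v"
  shows "distance_sum (insert m T) F v = activity_sum (insert m T) F v"
proof -
  have not_top: "\<not> determined_by_higher (insert m T) F B m" if "B \<in> F" for B
  proof -
    obtain B1 B2 where "B1 \<in> F" "m \<in> B1" "B2 \<in> F" "-m \<in> B2" using both[of m] both[of "-m"] by auto
    moreover from this have "m \<notin> B2" using top_sign[of B2] by simp
    ultimately show ?thesis unfolding determined_top by auto
  qed
  have half: "(\<Sum>S | transversal T S. (v - 1) ^ feasible_distance F (insert s S)) =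
      (\<Sum>B\<in>{B \<in> F. s \<in> B}. v ^ activity (insert m T) F B)"
    if s: "s \<in> {m, -m}" for s
  proof -
    have "(\<Sum>S | transversal T S. (v - 1) ^ feasible_distance F (insert s S)) = distance_sum T (slice s) v"
      unfolding distance_sum_def by (intro sum.cong refl) (simp add: distance_insert[OF s both[OF s]])
    also have "\<dots> = v ^ of_bool False * activity_sum T (slice s) v" using IH[OF s] by simp
    also have "\<dots> = (\<Sum>B\<in>{B \<in> F. s \<in> B}. v ^ activity (insert m T) F B)"
      by (rule activity_sum_slice[OF s, symmetric]) (use not_top in blast)
    finally show ?thesis .
  qed
  have "activity_sum (insert m T) F v =
      (\<Sum>B\<in>{B \<in> F. m \<in> B}. v ^ activity (insert m T) F B) +
      (\<Sum>B\<in>{B \<in> F. -m \<in> B}. v ^ activity (insert m T) F B)"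
    unfolding activity_sum_def by (rule sum_split_top_sign)
  then show ?thesis unfolding distance_sum_split using half[of m] half[of "-m"] by simp
qed

end

theorem distance_sum_eq_activity_sum:
  fixes v :: "'a::comm_ring_1"
  assumes "finite T" "T \<subseteq> {1..}" "F \<noteq> {}" "\<And>B. B \<in> F \<Longrightarrow> transversal T B"
    and "symmetric_exchange T F"
  shows "distance_sum T F v = activity_sum T F v"
  using assms
proof (induction T arbitrary: F rule: finite_linorder_max_induct)
  case empty
  then have "F = {{}}" using transversal_empty by auto
  then show ?case by (simp add: distance_sum_def activity_sum_def activity_def transversal_empty feasible_distance_def)
next
  case (insert m T)
  have "1 \<le> m" "T \<subseteq> {1..}" using insert.prems(1) by auto
  then interpret top_deletion T m F
    using insert.hyps(1,2) insert.prems(3,4) by unfold_locales auto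
  have IH: "distance_sum T (slice s) v = activity_sum T (slice s) v"
    if s: "s \<in> {m, -m}" and ex: "\<exists>B\<in>F. s \<in> B" for s
  proof (rule insert.IH)
    show "slice s \<noteq> {}" using ex unfolding slice_def by blast
  qed (use positive slice_transversals slice_exchange[OF s] in auto)
  show ?case
  proof (cases "\<exists>s\<in>{m, -m}. \<forall>B\<in>F. s \<in> B")
    case True
    then obtain s where s: "s \<in> {m, -m}" and all: "\<forall>B\<in>F. s \<in> B" by blast
    then have "\<exists>B\<in>F. s \<in> B" using insert.prems(2) by blast
    then show ?thesis using distance_sum_eq_activity_sum_if_fixed_sign[OF s all insert.prems(2)] IH[OF s] by blast
  next
    case False
    have "\<exists>B\<in>F. s \<in> B" if s: "s \<in> {m, -m}" for s
    proof -
      have "-s \<in> {m, -m}" using s by auto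
      with False obtain B where "B \<in> F" "-s \<notin> B" by blast
      then show ?thesis using top_sign[of B] s by auto
    qed
    then show ?thesis using distance_sum_eq_activity_sum_if_both_signs IH by blast
  qed
qed

section \<open>Admissible sets, projections and the rank function\<close>

lemma mem_bar_set: "x \<in> bar_set A \<longleftrightarrow> -x \<in> A"
  unfolding bar_set_def by (metis image_iff minus_minus)

lemma transversal_unsigned_if_admissible:
  assumes pos: "E \<subseteq> {1..}" and adm: "admissible E S"
  shows "unsigned S \<subseteq> E" and "transversal (unsigned S) S"
proof -
  have abs_cases: "\<bar>x\<bar> \<in> E \<and> (\<bar>x\<bar> = x \<or> \<bar>x\<bar> = -x)" if "x \<in> S" for x
  proof -
    have "x \<in> E \<or> -x \<in> E" using adm that unfolding admissible_def by (auto simp: mem_bar_set)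
    then show ?thesis using pos by (auto simp: subset_eq)
  qed
  show "unsigned S \<subseteq> E" unfolding unsigned_def using abs_cases by auto
  show "transversal (unsigned S) S"
  proof (rule transversalI)
    fix x assume "x \<in> S"
    then show "x \<in> unsigned S \<or> -x \<in> unsigned S"
      unfolding unsigned_def using abs_cases by (metis image_eqI)
  next
    fix k assume "k \<in> unsigned S"
    then obtain x where "x \<in> S" "k = \<bar>x\<bar>" unfolding unsigned_def by blast
    then have "k \<in> S \<or> -k \<in> S" by (cases "x \<ge> 0") auto
    then show "k \<in> S \<longleftrightarrow> -k \<notin> S" using adm unfolding admissible_def by blast
  qed
qed

lemma admissible_if_transversal_unsigned:
  assumes "unsigned S \<subseteq> E" and S: "transversal (unsigned S) S"
  shows "admissible E S"
proof -
  have "S \<subseteq> E \<union> bar_set E"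
  proof
    fix x assume "x \<in> S"
    then have "x \<in> E \<or> -x \<in> E" using assms(1) transversal_subD[OF S, of x] by blast
    then show "x \<in> E \<union> bar_set E" by (auto simp: mem_bar_set)
  qed
  moreover have "\<not> (x \<in> S \<and> -x \<in> S)" for x
  proof
    assume x: "x \<in> S \<and> -x \<in> S"
    then have "\<bar>x\<bar> \<in> unsigned S" unfolding unsigned_def by blast
    then have "\<bar>x\<bar> \<in> S \<longleftrightarrow> -\<bar>x\<bar> \<notin> S" using transversal_memD[OF S] by blast
    then show False using x by (cases "x \<ge> 0") auto
  qed
  ultimately show ?thesis unfolding admissible_def by blast
qed

lemma admissible_iff_transversal_unsigned:
  "E \<subseteq> {1..} \<Longrightarrow> admissible E S \<longleftrightarrow> unsigned S \<subseteq> E \<and> transversal (unsigned S) S"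
  using transversal_unsigned_if_admissible admissible_if_transversal_unsigned by blast

lemma admissible_with_support_iff:
  assumes "E \<subseteq> {1..}" "T \<subseteq> E"
  shows "admissible E S \<and> unsigned S = T \<longleftrightarrow> transversal T S"
  using admissible_iff_transversal_unsigned[OF assms(1)] transversal_abs(1)[of T S] assms
  unfolding unsigned_def by auto

lemma delta_matroid_transversal:
  assumes D: "delta_matroid E F" and B: "B \<in> F"
  shows "transversal E B"
proof -
  have E: "finite E" "E \<subseteq> {1..}" and "admissible E B" "card B = card E"
    using D B unfolding delta_matroid_def by auto
  then have U: "unsigned B \<subseteq> E" "transversal (unsigned B) B"
    using admissible_iff_transversal_unsigned by blast+
  moreover have "card (unsigned B) = card E"
    using card_transversal[OF _ U(2)] U(1) E(2) \<open>card B = card E\<close> by auto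
  ultimately have "unsigned B = E" using E(1) by (simp add: card_subset_eq)
  then show ?thesis using U(2) by simp
qed

definition project :: "int set \<Rightarrow> int set \<Rightarrow> int set" where
  "project A B = B - (A \<union> bar_set A)"

lemma proj_feas_project: "proj_feas F A = project A ` F"
  unfolding proj_feas_def project_def ..

lemma mem_project: "x \<in> project A B \<longleftrightarrow> x \<in> B \<and> x \<notin> A \<and> -x \<notin> A"
  unfolding project_def by (auto simp: mem_bar_set)

lemma mem_project_complement:
  assumes "T \<subseteq> E" "E \<subseteq> {1..}" "k \<in> T"
  shows "k \<in> project (E - T) B \<longleftrightarrow> k \<in> B"
proof -
  have "-k \<notin> E" using minus_notin_positive assms by blast
  then show ?thesis using assms(3) by (simp add: mem_project)
qed

lemma transversal_project:
  assumes B: "transversal E B" and "T \<subseteq> E" "E \<subseteq> {1..}"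
  shows "transversal T (project (E - T) B)"
proof (rule transversalI)
  fix x assume "x \<in> project (E - T) B"
  then show "x \<in> T \<or> -x \<in> T" using transversal_subD[OF B, of x] by (auto simp: mem_project)
next
  fix k assume k: "k \<in> T"
  have "-k \<notin> E" using minus_notin_positive assms(2,3) k by blast
  then have "-k \<in> project (E - T) B \<longleftrightarrow> -k \<in> B" using k by (simp add: mem_project)
  then show "k \<in> project (E - T) B \<longleftrightarrow> -k \<notin> project (E - T) B"
    using mem_project_complement[OF assms(2,3) k] transversal_memD[OF B] k assms(2) by blast
qed

lemma project_twist:
  assumes "i \<notin> A" "-i \<notin> A" "j \<notin> A" "-j \<notin> A"
  shows "project A (twist B i j) = twist (project A B) i j"
  using assms unfolding project_def twist_def by (auto simp: mem_bar_set)

lemma project_twist_absorbed: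
  assumes "i \<notin> A" "-i \<notin> A" "j \<in> A"
  shows "project A (twist B i j) = twist (project A B) i i"
  using assms unfolding project_def twist_def by (auto simp: mem_bar_set)

lemma symmetric_exchange_proj_feas:
  assumes exchange: "symmetric_exchange E F" and pos: "E \<subseteq> {1..}" and "T \<subseteq> E"
  shows "symmetric_exchange T (proj_feas F (E - T))"
  unfolding symmetric_exchange_def proj_feas_project
proof (intro ballI impI)
  let ?A = "E - T"
  fix B1' B2' i assume "B1' \<in> project ?A ` F" "B2' \<in> project ?A ` F" and i: "i \<in> T"
    and differ: "i \<in> B1' \<longleftrightarrow> i \<notin> B2'"
  then obtain B1 B2 where B1: "B1 \<in> F" "B1' = project ?A B1" and B2: "B2 \<in> F" "B2' = project ?A B2"
    by blast
  have lower: "k \<notin> ?A" "-k \<notin> ?A" if "k \<in> T" for k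
    using that minus_notin_positive[OF pos] \<open>T \<subseteq> E\<close> by auto
  have "i \<in> B1 \<longleftrightarrow> i \<notin> B2" using differ B1(2) B2(2) mem_project_complement[OF \<open>T \<subseteq> E\<close> pos i] by simp
  then obtain j where j: "j \<in> E" "j \<in> B1 \<longleftrightarrow> j \<notin> B2" "twist B1 i j \<in> F"
    using symmetric_exchangeD[OF exchange B1(1) B2(1)] i \<open>T \<subseteq> E\<close> by blast
  show "\<exists>j\<in>T. (j \<in> B1' \<longleftrightarrow> j \<notin> B2') \<and> twist B1' i j \<in> project ?A ` F"
  proof (cases "j \<in> T")
    case True
    have "twist B1' i j = project ?A (twist B1 i j)"
      using project_twist[OF lower[OF i] lower[OF True]] B1(2) by simp
    moreover have "j \<in> B1' \<longleftrightarrow> j \<notin> B2'"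
      using j(2) B1(2) B2(2) mem_project_complement[OF \<open>T \<subseteq> E\<close> pos True] by simp
    ultimately show ?thesis using True j(3) by blast
  next
    case False
    have "twist B1' i i = project ?A (twist B1 i j)"
      using project_twist_absorbed[OF lower[OF i]] False j(1) B1(2) by simp
    then show ?thesis using i differ j(3) by blast
  qed
qed

lemma feasible_distance_proj_feas:
  assumes "T \<subseteq> E" "E \<subseteq> {1..}" and S: "transversal T S"
  shows "feasible_distance (proj_feas F (E - T)) S = feasible_distance F S"
  unfolding proj_feas_project
proof (rule feasible_distance_image)
  fix B
  have "x \<notin> E - T \<and> -x \<notin> E - T" if "x \<in> S" for x
    using transversal_subD[OF S that] minus_notin_positive[OF assms(2)] assms(1)
    by (metis DiffD2 DiffE minus_minus subsetD)
  then show "S - project (E - T) B = S - B" by (auto simp: mem_project)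
qed

text \<open>Against a feasible set \<open>B\<close>, every element of an admissible \<open>S\<close> outside \<open>B\<close> has its
  bar in \<open>B\<close>.\<close>

lemma signed_overlap:
  assumes B: "transversal E B" and S: "admissible E S" and "finite E"
  shows "int (card (S \<inter> B)) - int (card (bar_set S \<inter> B)) = int (card S) - 2 * int (card (S - B))"
proof -
  have in_E: "x \<in> E \<or> -x \<in> E" if "x \<in> S" for x
    using S that unfolding admissible_def by (auto simp: mem_bar_set)
  have "finite S" using S \<open>finite E\<close> unfolding admissible_def bar_set_def by (meson finite_Un finite_imageI finite_subset)
  have "bar_set S \<inter> B = uminus ` (S - B)"
  proof (intro set_eqI iffI)
    fix y assume "y \<in> bar_set S \<inter> B"
    then have "-y \<in> S" "y \<in> B" by (auto simp: mem_bar_set)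
    moreover from this have "-y \<notin> B"
      using in_E[of "-y"] transversal_memD[OF B, of y] transversal_memD[OF B, of "-y"] by auto
    ultimately show "y \<in> uminus ` (S - B)" by (metis DiffI image_eqI minus_minus)
  next
    fix y assume "y \<in> uminus ` (S - B)"
    then obtain x where "x \<in> S" "x \<notin> B" "y = -x" by blast
    moreover from this have "-x \<in> B"
      using in_E[of x] transversal_memD[OF B, of x] transversal_memD[OF B, of "-x"] by auto
    ultimately show "y \<in> bar_set S \<inter> B" by (simp add: mem_bar_set)
  qed
  then have "card (bar_set S \<inter> B) = card (S - B)" by (simp add: card_image)
  moreover have "card (S \<inter> B) + card (S - B) = card S" using card_Int_Diff[OF \<open>finite S\<close>] by simp
  ultimately show ?thesis by linarith
qed

lemma rank_g_eq_feasible_distance: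
  assumes "finite E" "F \<noteq> {}" and F: "\<And>B. B \<in> F \<Longrightarrow> transversal E B" and S: "admissible E S"
  shows "rank_g F S = int (card S) - 2 * int (feasible_distance F S)"
proof -
  have "finite F" using finite_subset[OF _ finite_transversals[OF \<open>finite E\<close>]] F by blast
  have overlap: "int (card (S \<inter> B)) - int (card (bar_set S \<inter> B)) = int (card S) - 2 * int (card (S - B))"
    if "B \<in> F" for B using signed_overlap[OF F[OF that] S \<open>finite E\<close>] .
  obtain B0 where B0: "B0 \<in> F" "feasible_distance F S = card (S - B0)"
    using feasible_distance_attained[OF \<open>finite F\<close> \<open>F \<noteq> {}\<close>] by metis
  show ?thesis unfolding rank_g_def
  proof (rule Max_eqI)
    fix y assume "y \<in> (\<lambda>B. int (card (S \<inter> B)) - int (card (bar_set S \<inter> B))) ` F"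
    then obtain B where "B \<in> F" "y = int (card (S \<inter> B)) - int (card (bar_set S \<inter> B))" by blast
    then show "y \<le> int (card S) - 2 * int (feasible_distance F S)"
      using overlap feasible_distance_le[OF \<open>finite F\<close>, of B S] by simp
  next
    show "int (card S) - 2 * int (feasible_distance F S) \<in> (\<lambda>B. int (card (S \<inter> B)) - int (card (bar_set S \<inter> B))) ` F"
      using overlap[OF B0(1)] B0 by (metis (no_types, lifting) image_eqI)
  qed (use \<open>finite F\<close> in simp)
qed

lemma project_eq_of_subset:
  assumes I: "transversal T I" and B: "transversal E B" and "T \<subseteq> E" "E \<subseteq> {1..}" and "I \<subseteq> B"
  shows "I = project (E - T) B"
proof (rule transversal_eqI[OF I transversal_project[OF B assms(3,4)]])
  fix k assume "k \<in> T"
  then have "k \<in> I \<longleftrightarrow> k \<in> B"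
    using \<open>I \<subseteq> B\<close> \<open>T \<subseteq> E\<close> transversal_memD[OF I] transversal_memD[OF B] by blast
  then show "k \<in> I \<longleftrightarrow> k \<in> project (E - T) B" using mem_project_complement[OF assms(3,4) \<open>k \<in> T\<close>] by simp
qed

lemma independent_with_support:
  assumes D: "delta_matroid {1..int n} F" and T: "T \<subseteq> {1..int n}"
  shows "{I. transversal T I \<and> independent n F I} = proj_feas F ({1..int n} - T)"
proof -
  let ?E = "{1..int n}"
  have pos: "?E \<subseteq> {1..}" by auto
  have F: "\<And>B. B \<in> F \<Longrightarrow> transversal ?E B" using delta_matroid_transversal[OF D] .
  have "F \<noteq> {}" using D unfolding delta_matroid_def by blast
  have "finite F" using finite_subset[OF _ finite_transversals[of ?E]] F by blast
  have rank: "independent n F I \<longleftrightarrow> feasible_distance F I = 0" if I: "transversal T I" for I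
  proof -
    have "admissible ?E I" using admissible_with_support_iff[OF pos T] I by blast
    then show ?thesis
      using rank_g_eq_feasible_distance[OF _ \<open>F \<noteq> {}\<close> F] unfolding independent_def AdS_def by auto
  qed
  show ?thesis
  proof (intro set_eqI iffI)
    fix I assume "I \<in> {I. transversal T I \<and> independent n F I}"
    then have I: "transversal T I" "feasible_distance F I = 0" using rank by auto
    then obtain B where "B \<in> F" "card (I - B) = 0"
      using feasible_distance_attained[OF \<open>finite F\<close> \<open>F \<noteq> {}\<close>] by metis
    then have "I \<subseteq> B" using finite_transversal[OF finite_subset[OF T] I(1)] by auto
    then have "I = project (?E - T) B" using project_eq_of_subset[OF I(1) F[OF \<open>B \<in> F\<close>] T pos] by blast
    then show "I \<in> proj_feas F (?E - T)" unfolding proj_feas_project using \<open>B \<in> F\<close> by blast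
  next
    fix I assume "I \<in> proj_feas F (?E - T)"
    then obtain B where B: "B \<in> F" "I = project (?E - T) B" unfolding proj_feas_project by blast
    then have I: "transversal T I" using transversal_project[OF F T pos] by blast
    have "feasible_distance F I \<le> card (I - B)" by (rule feasible_distance_le[OF \<open>finite F\<close> B(1)])
    moreover have "I - B = {}" using B(2) unfolding project_def by blast
    ultimately show "I \<in> {I. transversal T I \<and> independent n F I}" using rank[OF I] I by simp
  qed
qed

lemma active_iff_no_twist:
  assumes "i \<in> T"
  shows "active T G B i \<longleftrightarrow> (\<forall>j\<in>T. j \<le> i \<longrightarrow> twist B i j \<notin> G)"
proof -
  have "twist B i i = (B - {i, -i}) \<union> ({i, -i} - B)" by (simp add: twist_def)
  then have "active T G B i \<longleftrightarrow> twist B i i \<notin> G \<and> (\<forall>j\<in>T. j < i \<longrightarrow> twist B i j \<notin> G)"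
    unfolding active_def orientable_def twist_def using assms by auto
  also have "\<dots> \<longleftrightarrow> (\<forall>j\<in>T. j \<le> i \<longrightarrow> twist B i j \<notin> G)" using assms by (auto simp: le_less)
  finally show ?thesis .
qed

lemma active_iff_determined_by_higher:
  assumes exchange: "symmetric_exchange T G" and pos: "T \<subseteq> {1..}" and B: "B \<in> G" and i: "i \<in> T"
  shows "active T G B i \<longleftrightarrow> determined_by_higher T G B i"
proof -
  note active_twist = active_iff_no_twist[OF i]
  have twist_above: "k \<in> twist B i j \<longleftrightarrow> k \<in> B" if "k \<in> T" "j \<in> T" "j \<le> i" "i < k" for k j
    using subsetD[OF pos i] subsetD[OF pos \<open>j \<in> T\<close>] that by (auto simp: mem_twist)
  show ?thesis
  proof
    assume act: "active T G B i"
    show "determined_by_higher T G B i" unfolding determined_by_higher_def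
    proof (intro ballI impI)
      fix B' assume B': "B' \<in> G" and above: "\<forall>k\<in>T. i < k \<longrightarrow> (k \<in> B' \<longleftrightarrow> k \<in> B)"
      show "i \<in> B' \<longleftrightarrow> i \<in> B"
      proof (rule ccontr)
        assume "\<not> (i \<in> B' \<longleftrightarrow> i \<in> B)"
        then obtain j where j: "j \<in> T" "j \<in> B \<longleftrightarrow> j \<notin> B'" "twist B i j \<in> G"
          using symmetric_exchangeD[OF exchange B B' i] by blast
        show False
        proof (cases "j \<le> i")
          case True
          then show False using act active_twist j(1,3) by blast
        next
          case False
          then show False using above j(1,2) by auto
        qed
      qed
    qed
  next
    assume det: "determined_by_higher T G B i"
    have "twist B i j \<notin> G" if j: "j \<in> T" "j \<le> i" for j
    proof
      assume "twist B i j \<in> G"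
      moreover have "\<forall>k\<in>T. i < k \<longrightarrow> (k \<in> twist B i j \<longleftrightarrow> k \<in> B)" using twist_above j by blast
      ultimately have "i \<in> twist B i j \<longleftrightarrow> i \<in> B" using det unfolding determined_by_higher_def by blast
      then show False by (simp add: mem_twist)
    qed
    then show "active T G B i" using active_twist by blast
  qed
qed

lemma a_count_proj_feas:
  assumes D: "delta_matroid {1..int n} F" and T: "T \<subseteq> {1..int n}"
    and exchange: "symmetric_exchange T (proj_feas F ({1..int n} - T))"
    and I: "I \<in> proj_feas F ({1..int n} - T)"
  shows "a_count n F I = activity T (proj_feas F ({1..int n} - T)) I"
proof -
  have pos: "T \<subseteq> {1..}" using T by auto
  have "transversal T I"
    using I transversal_project[OF delta_matroid_transversal[OF D] T] unfolding proj_feas_project by auto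
  then have "unsigned I = T" using transversal_abs(1)[OF pos] unfolding unsigned_def by blast
  moreover have "{1..int n} - ({1..int n} - T) = T" using T by blast
  moreover have "{i \<in> T. active T (proj_feas F ({1..int n} - T)) I i} =
      {i \<in> T. determined_by_higher T (proj_feas F ({1..int n} - T)) I i}"
    using active_iff_determined_by_higher[OF exchange pos I] by blast
  ultimately show ?thesis unfolding a_count_def activity_def by simp
qed

section \<open>The exchange property from the edges of the polytope\<close>

lemma lookup_scaleR_poly_mapping:
  "Poly_Mapping.lookup (r *\<^sub>R p) k = r * Poly_Mapping.lookup (p :: 'a \<Rightarrow>\<^sub>0 real) k"
  unfolding scaleR_poly_mapping_def
  by (subst lookup_Abs_poly_mapping) (auto intro: finite_subset[OF _ finite_lookup[of p]])

lemma linear_lookup_sum: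
  "linear (\<lambda>p :: 'a \<Rightarrow>\<^sub>0 real. \<Sum>k\<in>K. c k * Poly_Mapping.lookup p (f k))"
  by (rule linearI) (simp_all add: lookup_add lookup_scaleR_poly_mapping sum.distrib sum_distrib_left algebra_simps)

lemma face_of_supporting_functional:
  fixes L :: "'a::real_vector \<Rightarrow> real"
  assumes L: "linear L" and "convex S" and le: "\<And>x. x \<in> S \<Longrightarrow> L x \<le> M"
  shows "S \<inter> {x. L x = M} face_of S"
proof -
  have "L a = M \<and> L b = M" if a: "a \<in> S" and b: "b \<in> S" and "L x = M" and "x \<in> open_segment a b"
    for a b x
  proof -
    obtain t where t: "0 < t" "t < 1" "x = (1 - t) *\<^sub>R a + t *\<^sub>R b"
      using \<open>x \<in> open_segment a b\<close> by (auto simp: in_segment)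
    have "M = (1 - t) * L a + t * L b" using \<open>L x = M\<close> t(3) linear_add[OF L] linear_scale[OF L] by simp
    then have "(1 - t) * (M - L a) + t * (M - L b) = 0" by (simp add: algebra_simps)
    moreover have "0 \<le> (1 - t) * (M - L a)" "0 \<le> t * (M - L b)" using t le[OF a] le[OF b] by simp_all
    ultimately show ?thesis using t by (simp add: add_nonneg_eq_0_iff)
  qed
  moreover have "convex (S \<inter> {x. L x = M})"
    using convex_linear_vimage[OF L convex_singleton[of M]] \<open>convex S\<close> by (simp add: vimage_def convex_Int)
  ultimately show ?thesis unfolding face_of_def by blast
qed

lemma convex_hull_Int_supporting_functional:
  fixes L :: "'a::real_vector \<Rightarrow> real"
  assumes "finite V" and L: "linear L" and le: "\<And>v. v \<in> V \<Longrightarrow> L v \<le> M"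
  shows "convex hull V \<inter> {x. L x = M} = convex hull (V \<inter> {x. L x = M})"
proof (intro subset_antisym subsetI)
  fix p assume "p \<in> convex hull V \<inter> {x. L x = M}"
  then obtain u where u: "\<forall>v\<in>V. 0 \<le> u v" "sum u V = 1" "(\<Sum>v\<in>V. u v *\<^sub>R v) = p" and "L p = M"
    unfolding convex_hull_finite[OF \<open>finite V\<close>] by blast
  have "L p = (\<Sum>v\<in>V. u v * L v)"
    unfolding u(3)[symmetric] linear_sum[OF L] by (simp add: linear_scale[OF L])
  then have "(\<Sum>v\<in>V. u v * (M - L v)) = M * sum u V - L p"
    by (simp add: algebra_simps sum_subtractf sum_distrib_left)
  then have "(\<Sum>v\<in>V. u v * (M - L v)) = 0" using u(2) \<open>L p = M\<close> by simp
  moreover have "0 \<le> u v * (M - L v)" if "v \<in> V" for v using u(1) le[OF that] that by simp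
  ultimately have "\<forall>v\<in>V. u v * (M - L v) = 0"
    using sum_nonneg_eq_0_iff[OF \<open>finite V\<close>, of "\<lambda>v. u v * (M - L v)"] by blast
  then have zero: "u v = 0" if "v \<in> V - {x. L x = M}" for v using that by auto
  have "sum u (V \<inter> {x. L x = M}) = sum u V"
    by (rule sum.mono_neutral_left) (use \<open>finite V\<close> zero in auto)
  moreover have "(\<Sum>v\<in>V \<inter> {x. L x = M}. u v *\<^sub>R v) = (\<Sum>v\<in>V. u v *\<^sub>R v)"
    by (rule sum.mono_neutral_left) (use \<open>finite V\<close> zero in auto)
  ultimately have "sum u (V \<inter> {x. L x = M}) = 1" "(\<Sum>v\<in>V \<inter> {x. L x = M}. u v *\<^sub>R v) = p"
    using u(2,3) by simp_all
  then show "p \<in> convex hull (V \<inter> {x. L x = M})"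
    unfolding convex_hull_finite[OF finite_Int[OF disjI1, OF \<open>finite V\<close>]] using u(1) by auto
next
  fix p assume p: "p \<in> convex hull (V \<inter> {x. L x = M})"
  have "convex {x. L x = M}" using convex_linear_vimage[OF L convex_singleton[of M]] by (simp add: vimage_def)
  then show "p \<in> convex hull V \<inter> {x. L x = M}"
    using p hull_mono[of "V \<inter> {x. L x = M}" V] hull_minimal[of "V \<inter> {x. L x = M}" "{x. L x = M}" convex]
    by blast
qed

lemma closed_segment_face_of_convex_hull:
  fixes L :: "'a::real_vector \<Rightarrow> real"
  assumes "finite V" "linear L" "x \<in> V" "y \<in> V" "L x = M" "L y = M"
    and less: "\<And>v. v \<in> V \<Longrightarrow> v \<noteq> x \<Longrightarrow> v \<noteq> y \<Longrightarrow> L v < M"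
  shows "closed_segment x y face_of convex hull V"
proof -
  have le: "L v \<le> M" if "v \<in> V" for v using less[OF that] assms(5,6) by fastforce
  have "convex {p. L p \<le> M}" using convex_linear_vimage[OF assms(2) convex_real_interval(2)[of M]]
    by (simp add: vimage_def)
  then have "\<And>p. p \<in> convex hull V \<Longrightarrow> L p \<le> M" using le hull_minimal[of V "{p. L p \<le> M}" convex] by blast
  then have "convex hull V \<inter> {p. L p = M} face_of convex hull V"
    using face_of_supporting_functional[OF assms(2) convex_convex_hull] by blast
  moreover have "V \<inter> {p. L p = M} = {x, y}" using assms(3-6) less by fastforce
  ultimately show ?thesis
    using convex_hull_Int_supporting_functional[OF assms(1,2) le] by (simp add: segment_convex_hull)
qed

lemma pair_subset_witness:
  assumes "X \<subseteq> {p, q}" "i \<in> X"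
  obtains j where "X = {i, j}"
proof (cases "X \<subseteq> {i}")
  case True
  then show ?thesis using that[of i] assms(2) by auto
next
  case False
  then obtain x where "x \<in> X" "x \<noteq> i" by blast
  then have "X = {i, x}" using assms by auto
  then show ?thesis using that by blast
qed

lemma lookup_unit_dir: "Poly_Mapping.lookup (unit_dir i) k = (if nat i = k then 1 else 0)"
  unfolding unit_dir_def lookup_single by (simp add: when_def)

lemma lookup_evec:
  assumes B: "transversal E B" and pos: "E \<subseteq> {1..}" and "finite E" and k: "k \<in> E"
  shows "Poly_Mapping.lookup (evec B) (nat k) = (if k \<in> B then 1 else -1)"
proof -
  have "1 \<le> k" using pos k by auto
  have "finite B" using finite_transversal[OF \<open>finite E\<close> B] .
  have "Poly_Mapping.lookup (evec B) (nat k) = (\<Sum>a\<in>B. if a \<in> {k, -k} then of_int (sgn a) else 0)"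
    unfolding evec_def evec1_def lookup_sum lookup_scaleR_poly_mapping lookup_single
    using \<open>1 \<le> k\<close> by (intro sum.cong refl) (auto simp: when_def abs_if split: if_splits)
  also have "\<dots> = (\<Sum>a\<in>B \<inter> {k, -k}. of_int (sgn a))"
    by (rule sum.inter_restrict[OF \<open>finite B\<close>, symmetric])
  also have "B \<inter> {k, -k} = (if k \<in> B then {k} else {-k})"
    using transversal_memD[OF B k] by auto
  finally show ?thesis using \<open>1 \<le> k\<close> by simp
qed

definition disagreement :: "int set \<Rightarrow> int set \<Rightarrow> int set \<Rightarrow> int set" where
  "disagreement E B B' = {k \<in> E. k \<in> B \<longleftrightarrow> k \<notin> B'}"

lemma lookup_evec_diff_eq_0_iff:
  assumes "transversal E B" "transversal E B'" "E \<subseteq> {1..}" "finite E" "k \<in> E"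
  shows "Poly_Mapping.lookup (evec B' - evec B) (nat k) = 0 \<longleftrightarrow> k \<notin> disagreement E B B'"
  using assms(5) unfolding lookup_minus lookup_evec[OF assms(1,3-5)] lookup_evec[OF assms(2,3-5)]
    disagreement_def by auto

lemma disagreement_inject:
  assumes "transversal E B'" "transversal E B''" "disagreement E B B' = disagreement E B B''"
  shows "B' = B''"
proof (rule transversal_eqI[OF assms(1,2)])
  fix k assume "k \<in> E"
  then show "k \<in> B' \<longleftrightarrow> k \<in> B''" using assms(3) unfolding disagreement_def by blast
qed

lemma twist_eq_of_disagreement:
  assumes B: "transversal E B" and B': "transversal E B'" and pos: "E \<subseteq> {1..}"
    and D: "disagreement E B B' = {i, j}"
  shows "twist B i j = B'"
proof (rule transversal_eqI[OF transversal_twist[OF B] B'])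
  show ij: "i \<in> E" "j \<in> E" using D unfolding disagreement_def by auto
  fix k assume "k \<in> E"
  then have "k \<noteq> -i" "k \<noteq> -j" using ij pos minus_notin_positive by force+
  moreover have "k \<in> {i, j} \<longleftrightarrow> (k \<in> B \<longleftrightarrow> k \<notin> B')" using D \<open>k \<in> E\<close> unfolding disagreement_def by blast
  ultimately show "k \<in> twist B i j \<longleftrightarrow> k \<in> B'" by (auto simp: mem_twist)
qed

text \<open>Coordinates outside the disagreement set \<open>D\<close> weigh \<open>|D|\<close>, more than the single
  negative weight \<open>1 - |D|\<close> (at \<open>i\<close>) can compensate; a subset of \<open>D\<close> has weight \<open>\<le> 0\<close> only
  if it contains \<open>i\<close>, and \<open>D\<close> itself has weight \<open>0\<close>.\<close>

definition edge_weight :: "int set \<Rightarrow> int \<Rightarrow> int \<Rightarrow> real" where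
  "edge_weight D i k = (if k \<notin> D then real (card D) else if k = i then 1 - real (card D) else 1)"

lemma sum_edge_weight_self:
  assumes "finite D" "i \<in> D"
  shows "(\<Sum>k\<in>D. edge_weight D i k) = 0"
proof -
  have "(\<Sum>k\<in>D. edge_weight D i k) = edge_weight D i i + (\<Sum>k\<in>D - {i}. edge_weight D i k)"
    by (rule sum.remove[OF assms])
  also have "(\<Sum>k\<in>D - {i}. edge_weight D i k) = real (card (D - {i}))"
    by (simp add: edge_weight_def)
  also have "real (card (D - {i})) = real (card D) - 1"
  proof -
    have "1 \<le> card D" using assms by (auto simp: Suc_le_eq card_gt_0_iff)
    then show ?thesis using assms by (simp add: card_Diff_singleton of_nat_diff)
  qed
  finally show ?thesis using assms by (simp add: edge_weight_def)
qed

lemma sum_edge_weight_pos: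
  assumes D: "finite D" "i \<in> D" and X: "finite X" "X \<noteq> {}" "X \<noteq> D"
    and minimal: "X \<subseteq> D \<Longrightarrow> i \<in> X \<Longrightarrow> X = D"
  shows "0 < (\<Sum>k\<in>X. edge_weight D i k)"
proof (cases "X \<subseteq> D")
  case True
  then have "i \<notin> X" using minimal X(3) by blast
  then have "(\<Sum>k\<in>X. edge_weight D i k) = (\<Sum>k\<in>X. 1)"
    using True by (intro sum.cong) (auto simp: edge_weight_def)
  then show ?thesis using X by (simp add: card_gt_0_iff)
next
  case False
  then obtain k0 where k0: "k0 \<in> X" "k0 \<notin> D" by blast
  have "1 \<le> card D" using D by (auto simp: Suc_le_eq card_gt_0_iff)
  have "(\<Sum>k\<in>X - {k0}. (if k = i then 1 - real (card D) else 0)) \<le> (\<Sum>k\<in>X - {k0}. edge_weight D i k)"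
    using \<open>1 \<le> card D\<close> by (intro sum_mono) (auto simp: edge_weight_def)
  moreover have "(\<Sum>k\<in>X - {k0}. (if k = i then 1 - real (card D) else 0)) \<ge> 1 - real (card D)"
    using X(1) \<open>1 \<le> card D\<close> by (simp add: sum.delta)
  ultimately show ?thesis
    using sum.remove[OF X(1) k0(1), of "edge_weight D i"] k0 by (simp add: edge_weight_def)
qed

lemma face_of_nearest_disagreement:
  assumes E: "finite E" "E \<subseteq> {1..}" and F: "\<And>B. B \<in> F \<Longrightarrow> transversal E B" "finite F"
    and B1: "B1 \<in> F" and y: "y \<in> F" and i: "i \<in> disagreement E B1 y"
    and minimal: "\<And>B. B \<in> F \<Longrightarrow> i \<in> disagreement E B1 B \<Longrightarrow>
      disagreement E B1 B \<subseteq> disagreement E B1 y \<Longrightarrow> disagreement E B1 B = disagreement E B1 y"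
  shows "closed_segment (evec B1) (evec y) face_of convex hull (evec ` F)"
proof -
  define D where "D = disagreement E B1 y"
  define w where "w = edge_weight D i"
  define L where "L p = (\<Sum>k\<in>E. (w k * (if k \<in> B1 then 1 else -1)) * Poly_Mapping.lookup p (nat k))" for p
  define M where "M = (\<Sum>k\<in>E. w k)"
  have "finite D" "D \<subseteq> E" "i \<in> D" using E(1) i unfolding D_def disagreement_def by auto
  have L_evec: "L (evec B) = M - 2 * (\<Sum>k\<in>disagreement E B1 B. w k)" if "B \<in> F" for B
  proof -
    have "L (evec B) = (\<Sum>k\<in>E. w k - 2 * (if k \<in> disagreement E B1 B then w k else 0))"
      unfolding L_def disagreement_def using lookup_evec[OF F(1)[OF that] E(2,1)] by (intro sum.cong) auto
    also have "\<dots> = M - 2 * (\<Sum>k\<in>E \<inter> disagreement E B1 B. w k)"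
      unfolding M_def sum.inter_restrict[OF E(1)] by (simp add: sum_subtractf sum_distrib_left)
    finally show ?thesis by (simp add: Int_absorb1 disagreement_def)
  qed
  show ?thesis
  proof (rule closed_segment_face_of_convex_hull[where L = L and M = M])
    show "linear L" unfolding L_def by (rule linear_lookup_sum)
    show "L (evec B1) = M" using L_evec[OF B1] by (simp add: disagreement_def)
    show "L (evec y) = M" using L_evec[OF y] sum_edge_weight_self[OF \<open>finite D\<close> \<open>i \<in> D\<close>] by (simp add: D_def w_def)
  next
    fix v assume "v \<in> evec ` F" "v \<noteq> evec B1" "v \<noteq> evec y"
    then obtain B where B: "B \<in> F" "v = evec B" "B \<noteq> B1" "B \<noteq> y" by blast
    have "disagreement E B1 B \<noteq> {}"
      using disagreement_inject[OF F(1)[OF B(1)] F(1)[OF B1], of B1] B(3) by (auto simp: disagreement_def)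
    moreover have "disagreement E B1 B \<noteq> D"
      using disagreement_inject[OF F(1)[OF B(1)] F(1)[OF y]] B(4) unfolding D_def by blast
    moreover have "finite (disagreement E B1 B)" using E(1) by (simp add: disagreement_def)
    ultimately have "0 < (\<Sum>k\<in>disagreement E B1 B. w k)"
      unfolding w_def using minimal[OF B(1)] D_def
      by (intro sum_edge_weight_pos[OF \<open>finite D\<close> \<open>i \<in> D\<close>]) auto
    then show "L v < M" using L_evec[OF B(1)] B(2) by simp
  qed (use E(1) F(2) B1 y in auto)
qed

lemma allowed_direction_support:
  assumes "allowed_direction E d"
  obtains p q where "p \<in> E" "q \<in> E" "\<And>k. Poly_Mapping.lookup d k \<noteq> 0 \<Longrightarrow> k = nat p \<or> k = nat q"
proof -
  obtain c p q where "p \<in> E" "q \<in> E" and d: "d = c *\<^sub>R unit_dir p \<or>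
      d = c *\<^sub>R (unit_dir p + unit_dir q) \<or> d = c *\<^sub>R (unit_dir p - unit_dir q)"
    using assms unfolding allowed_direction_def by blast
  moreover have "Poly_Mapping.lookup d k = 0" if "k \<noteq> nat p" "k \<noteq> nat q" for k
    using d that by (auto simp: lookup_scaleR_poly_mapping lookup_add lookup_minus lookup_unit_dir)
  ultimately show ?thesis using that by blast
qed

lemma disagreement_of_allowed_direction:
  assumes B: "transversal E B" and B': "transversal E B'" and E: "E \<subseteq> {1..}" "finite E"
    and "allowed_direction E (evec B' - evec B)" and i: "i \<in> disagreement E B B'"
  obtains j where "disagreement E B B' = {i, j}"
proof -
  obtain p q where pq: "p \<in> E" "q \<in> E"
    and support: "\<And>k. Poly_Mapping.lookup (evec B' - evec B) k \<noteq> 0 \<Longrightarrow> k = nat p \<or> k = nat q"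
    using allowed_direction_support[OF assms(5)] by blast
  have "disagreement E B B' \<subseteq> {p, q}"
  proof
    fix k assume k: "k \<in> disagreement E B B'"
    then have "k \<in> E" unfolding disagreement_def by blast
    then have "Poly_Mapping.lookup (evec B' - evec B) (nat k) \<noteq> 0"
      using lookup_evec_diff_eq_0_iff[OF B B' E] k by blast
    then have "nat k = nat p \<or> nat k = nat q" by (rule support)
    moreover have "1 \<le> k" "1 \<le> p" "1 \<le> q" using subsetD[OF E(1)] \<open>k \<in> E\<close> pq by auto
    ultimately show "k \<in> {p, q}" by auto
  qed
  then obtain j where "disagreement E B B' = {i, j}" using i by (rule pair_subset_witness)
  then show ?thesis by (rule that)
qed

theorem delta_matroid_symmetric_exchange:
  assumes D: "delta_matroid E F"
  shows "symmetric_exchange E F"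
  unfolding symmetric_exchange_def
proof (intro ballI impI)
  fix B1 B2 i assume B1: "B1 \<in> F" and B2: "B2 \<in> F" and "i \<in> E" and "i \<in> B1 \<longleftrightarrow> i \<notin> B2"
  have E: "finite E" "E \<subseteq> {1..}" using D unfolding delta_matroid_def by auto
  have edges: "\<And>x y. x \<noteq> y \<Longrightarrow> closed_segment x y face_of convex hull (evec ` F)
      \<Longrightarrow> allowed_direction E (y - x)"
    using D unfolding delta_matroid_def by blast
  have F: "\<And>B. B \<in> F \<Longrightarrow> transversal E B" using delta_matroid_transversal[OF D] .
  have "finite F" using finite_subset[OF _ finite_transversals[OF E(1)]] F by blast
  let ?D = "disagreement E B1"
  define P where "P B \<longleftrightarrow> B \<in> F \<and> i \<in> ?D B \<and> ?D B \<subseteq> ?D B2" for B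
  have "P B2" unfolding P_def disagreement_def using B2 \<open>i \<in> E\<close> \<open>i \<in> B1 \<longleftrightarrow> i \<notin> B2\<close> by blast
  then obtain y where "P y" and least: "\<And>B. P B \<Longrightarrow> card (?D y) \<le> card (?D B)"
    using ex_has_least_nat[of P B2 "\<lambda>B. card (?D B)"] by blast
  then have y: "y \<in> F" "i \<in> ?D y" "?D y \<subseteq> ?D B2" unfolding P_def by auto
  have "closed_segment (evec B1) (evec y) face_of convex hull (evec ` F)"
  proof (rule face_of_nearest_disagreement[OF E F \<open>finite F\<close> B1 y(1,2)])
    fix B assume "B \<in> F" "i \<in> ?D B" and sub: "?D B \<subseteq> ?D y"
    then have "card (?D y) \<le> card (?D B)" using least y(3) unfolding P_def by blast
    moreover have fin: "finite (?D y)" using E(1) by (simp add: disagreement_def)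
    ultimately show "?D B = ?D y" using card_mono[OF fin sub] card_subset_eq[OF fin sub] by linarith
  qed
  moreover have "evec B1 \<noteq> evec y"
    using lookup_evec_diff_eq_0_iff[OF F[OF B1] F[OF y(1)] E(2,1) \<open>i \<in> E\<close>] y(2) by auto
  ultimately have "allowed_direction E (evec y - evec B1)" using edges by blast
  then obtain j where j: "?D y = {i, j}"
    using disagreement_of_allowed_direction[OF F[OF B1] F[OF y(1)] E(2,1) _ y(2)] by blast
  then have "j \<in> E" "j \<in> B1 \<longleftrightarrow> j \<notin> B2" using y(3) unfolding disagreement_def by blast+
  moreover have "twist B1 i j \<in> F" using twist_eq_of_disagreement[OF F[OF B1] F[OF y(1)] E(2) j] y(1) by simp
  ultimately show "\<exists>j\<in>E. (j \<in> B1 \<longleftrightarrow> j \<notin> B2) \<and> twist B1 i j \<in> F" by blast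
qed

section \<open>Grouping by support\<close>

lemma finite_admissible: "finite E \<Longrightarrow> finite {S. admissible E S}"
  by (rule finite_subset[of _ "Pow (E \<union> bar_set E)"]) (auto simp: admissible_def bar_set_def)

lemma sum_admissible_by_support:
  fixes f :: "int set \<Rightarrow> 'a::comm_monoid_add"
  assumes "finite E" "E \<subseteq> {1..}"
  shows "(\<Sum>S | admissible E S \<and> P S. f S) = (\<Sum>T\<in>Pow E. \<Sum>S | transversal T S \<and> P S. f S)"
proof -
  have "finite {S. admissible E S \<and> P S}" using finite_admissible[OF assms(1)] by (rule rev_finite_subset) blast
  moreover have "unsigned ` {S. admissible E S \<and> P S} \<subseteq> Pow E"
    using admissible_iff_transversal_unsigned[OF assms(2)] by blast
  ultimately have "(\<Sum>S | admissible E S \<and> P S. f S) =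
      (\<Sum>T\<in>Pow E. \<Sum>S | S \<in> {S. admissible E S \<and> P S} \<and> unsigned S = T. f S)"
    using assms(1) by (intro sum.group[symmetric]) auto
  also have "\<dots> = (\<Sum>T\<in>Pow E. \<Sum>S | transversal T S \<and> P S. f S)"
    using admissible_with_support_iff[OF assms(2)] by (intro sum.cong refl) (metis (no_types, lifting) PowD mem_Collect_eq)
  finally show ?thesis .
qed

lemma U_poly_by_support:
  assumes D: "delta_matroid {1..int n} F"
  shows "U_poly n F u (v - 1) =
    (\<Sum>T\<in>Pow {1..int n}. u ^ (n - card T) * distance_sum T (proj_feas F ({1..int n} - T)) v)"
proof -
  let ?E = "{1..int n}"
  have F: "\<And>B. B \<in> F \<Longrightarrow> transversal ?E B" using delta_matroid_transversal[OF D] .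
  have "F \<noteq> {}" using D unfolding delta_matroid_def by blast
  have summand: "u ^ (n - card S) * (v - 1) ^ nat ((int (card S) - rank_g F S) div 2) =
      u ^ (n - card T) * (v - 1) ^ feasible_distance (proj_feas F (?E - T)) S"
    if T: "T \<subseteq> ?E" and S: "transversal T S" for T S
  proof -
    have "admissible ?E S" using admissible_with_support_iff[of ?E T S] T S by auto
    then have "rank_g F S = int (card S) - 2 * int (feasible_distance F S)"
      by (rule rank_g_eq_feasible_distance[OF _ \<open>F \<noteq> {}\<close> F, simplified])
    moreover have "card S = card T" using card_transversal[OF _ S] T by (auto simp: subset_eq)
    ultimately show ?thesis using feasible_distance_proj_feas[OF T _ S] by simp
  qed
  have "U_poly n F u (v - 1) =
      (\<Sum>S | admissible ?E S \<and> True. u ^ (n - card S) * (v - 1) ^ nat ((int (card S) - rank_g F S) div 2))"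
    unfolding U_poly_def AdS_def by simp
  also have "\<dots> = (\<Sum>T\<in>Pow ?E. \<Sum>S | transversal T S \<and> True.
      u ^ (n - card S) * (v - 1) ^ nat ((int (card S) - rank_g F S) div 2))"
    by (rule sum_admissible_by_support) auto
  also have "\<dots> = (\<Sum>T\<in>Pow ?E. u ^ (n - card T) * distance_sum T (proj_feas F (?E - T)) v)"
    unfolding distance_sum_def sum_distrib_left using summand by (intro sum.cong refl) auto
  finally show ?thesis .
qed

lemma independent_sum_by_support:
  assumes D: "delta_matroid {1..int n} F"
  shows "(\<Sum>I\<in>{I. independent n F I}. u ^ (n - card I) * v ^ a_count n F I) =
    (\<Sum>T\<in>Pow {1..int n}. u ^ (n - card T) * activity_sum T (proj_feas F ({1..int n} - T)) v)"
proof -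
  let ?E = "{1..int n}"
  have exchange: "symmetric_exchange T (proj_feas F (?E - T))" if "T \<subseteq> ?E" for T
    using symmetric_exchange_proj_feas[OF delta_matroid_symmetric_exchange[OF D] _ that] by auto
  have summand: "u ^ (n - card I) * v ^ a_count n F I =
      u ^ (n - card T) * v ^ activity T (proj_feas F (?E - T)) I"
    if T: "T \<subseteq> ?E" and I: "I \<in> proj_feas F (?E - T)" for T I
  proof -
    have "transversal T I" using independent_with_support[OF D T] I by blast
    then have "card I = card T" using card_transversal T by (auto simp: subset_eq)
    then show ?thesis using a_count_proj_feas[OF D T exchange[OF T] I] by simp
  qed
  have "(\<Sum>I\<in>{I. independent n F I}. u ^ (n - card I) * v ^ a_count n F I) =
      (\<Sum>I | admissible ?E I \<and> independent n F I. u ^ (n - card I) * v ^ a_count n F I)"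
    unfolding independent_def AdS_def by simp
  also have "\<dots> = (\<Sum>T\<in>Pow ?E. \<Sum>I | transversal T I \<and> independent n F I. u ^ (n - card I) * v ^ a_count n F I)"
    by (rule sum_admissible_by_support) auto
  also have "\<dots> = (\<Sum>T\<in>Pow ?E. u ^ (n - card T) * activity_sum T (proj_feas F (?E - T)) v)"
  proof (intro sum.cong refl)
    fix T assume "T \<in> Pow ?E"
    then have T: "T \<subseteq> ?E" by simp
    show "(\<Sum>I | transversal T I \<and> independent n F I. u ^ (n - card I) * v ^ a_count n F I) =
        u ^ (n - card T) * activity_sum T (proj_feas F (?E - T)) v"
      unfolding independent_with_support[OF D T] activity_sum_def sum_distrib_left
      using summand[OF T] by (intro sum.cong refl) auto
  qed
  finally show ?thesis .
qed

lemma distance_sum_eq_activity_sum_proj_feas: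
  assumes D: "delta_matroid E F" and T: "T \<subseteq> E"
  shows "distance_sum T (proj_feas F (E - T)) v = activity_sum T (proj_feas F (E - T)) v"
proof (rule distance_sum_eq_activity_sum)
  have E: "finite E" "E \<subseteq> {1..}" "F \<noteq> {}" using D unfolding delta_matroid_def by auto
  then show "finite T" "T \<subseteq> {1..}" "proj_feas F (E - T) \<noteq> {}"
    using T finite_subset unfolding proj_feas_def by auto
  show "transversal T B" if "B \<in> proj_feas F (E - T)" for B
    using that transversal_project[OF delta_matroid_transversal[OF D] T E(2)] unfolding proj_feas_project by blast
  show "symmetric_exchange T (proj_feas F (E - T))"
    by (rule symmetric_exchange_proj_feas[OF delta_matroid_symmetric_exchange[OF D] E(2) T])
qed

theorem theorem3p8:
  fixes n :: nat and \<F> :: "int set set" and u v :: "'a::comm_ring_1"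
  assumes "delta_matroid {1..int n} \<F>"
  shows "U_poly n \<F> u (v - 1) =
           (\<Sum>I\<in>{I. independent n \<F> I}. u ^ (n - card I) * v ^ a_count n \<F> I)"
proof -
  have "U_poly n \<F> u (v - 1) =
      (\<Sum>T\<in>Pow {1..int n}. u ^ (n - card T) * distance_sum T (proj_feas \<F> ({1..int n} - T)) v)"
    by (rule U_poly_by_support[OF assms])
  also have "\<dots> = (\<Sum>T\<in>Pow {1..int n}. u ^ (n - card T) * activity_sum T (proj_feas \<F> ({1..int n} - T)) v)"
    by (intro sum.cong refl) (simp add: distance_sum_eq_activity_sum_proj_feas[OF assms])
  also have "\<dots> = (\<Sum>I\<in>{I. independent n \<F> I}. u ^ (n - card I) * v ^ a_count n \<F> I)"
    by (rule independent_sum_by_support[OF assms, symmetric])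
  finally show ?thesis .
qed

end
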